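(* Let $\tilde{\mathbf{M}}$ be a real $n\times n$ skew-symmetric matrix. Then the optimization problem $\min_{\mathbf{M}\in\mathcal{M}_T(n)}\|\tilde{\mathbf{M}}-\mathbf{M}\|_F^2$ has the closed-form solution $\mathbf{M}^\ast=(\tilde{\mathbf{M}}\mathds{1}+\mathds{1}\tilde{\mathbf{M}})/n$.
   Context: $\mathds{1}$ is the $n\times n$ all-ones matrix; $\|\cdot\|_F$ is the Frobenius norm. A TDOA matrix is an $n\times n$ real matrix whose $(i,j)$ entry is $\tau_i-\tau_j$ for some $(\tau_1,\dots,\tau_n)\in\mathbb{R}^n$; $\mathcal{M}_T(n)$ is the set of all $n\times n$ TDOA matrices. In the paper $\tilde{\mathbf{M}}$ is a measured TDOA matrix, $\tilde{\mathbf{M}}=\mathbf{M}+\mathbf{N}$ with $\mathbf{M}\in\mathcal{M}_T(n)$ and $\mathbf{N}$ a skew-symmetric noise matrix, hence skew-symmetric. *)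

theory Defs
  imports "HOL-Analysis.Analysis"
begin

text \<open>n x n real matrices are rendered as real^'n^'n, with n = CARD('n).\<close>

definition ones_mat :: "real^'n^'n" where
  "ones_mat = (\<chi> i j. 1)"

definition skew_symmetric :: "real^'n^'n \<Rightarrow> bool" where
  "skew_symmetric A \<longleftrightarrow> transpose A = - A"

definition tdoa_matrices :: "(real^'n^'n) set" where
  "tdoa_matrices = {M. \<exists>\<tau>::real^'n. \<forall>i j. M $ i $ j = \<tau> $ i - \<tau> $ j}"

definition frob_norm :: "real^'n^'n \<Rightarrow> real" where
  "frob_norm A = sqrt (\<Sum>i\<in>UNIV. \<Sum>j\<in>UNIV. (A $ i $ j)^2)"

end

theory Submission
  imports Defs
begin

text \<open>The TDOA matrices form a linear subspace, and the candidate \<open>M\<^sup>*\<close> is a TDOA matrix whose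
  residual \<open>Mt - M\<^sup>*\<close> has vanishing row and column sums. A matrix with vanishing row and column
  sums is Frobenius-orthogonal to every TDOA matrix, since
  \<open>\<Sum>i j. E i j (\<tau> i - \<tau> j) = \<Sum>i. \<tau> i (row sum i) - \<Sum>j. \<tau> j (column sum j)\<close>.
  Hence \<open>M\<^sup>*\<close> is the orthogonal projection of \<open>Mt\<close> onto the subspace, and Pythagoras gives
  minimality.\<close>

definition row_sum :: "real^'n^'m \<Rightarrow> 'm \<Rightarrow> real" where
  "row_sum A i = (\<Sum>j\<in>UNIV. A $ i $ j)"

definition col_sum :: "real^'n^'m \<Rightarrow> 'n \<Rightarrow> real" where
  "col_sum A j = (\<Sum>i\<in>UNIV. A $ i $ j)"

lemma frob_norm_sq: "(frob_norm A)\<^sup>2 = (\<Sum>i\<in>UNIV. \<Sum>j\<in>UNIV. (A $ i $ j)\<^sup>2)"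
  unfolding frob_norm_def by (simp add: sum_nonneg)

lemma skew_symmetric_entry:
  assumes "skew_symmetric A"
  shows "A $ i $ j = - A $ j $ i"
proof -
  have "transpose A $ j $ i = (- A) $ j $ i"
    using assms unfolding skew_symmetric_def by simp
  then show ?thesis by (simp add: transpose_def)
qed

lemma skew_symmetric_col_sum:
  assumes "skew_symmetric A"
  shows "col_sum A j = - row_sum A j"
  unfolding col_sum_def row_sum_def
  by (subst skew_symmetric_entry[OF assms]) (simp add: sum_negf)

lemma skew_symmetric_sum_row_sum:
  assumes "skew_symmetric A"
  shows "(\<Sum>i\<in>UNIV. row_sum A i) = 0"
proof -
  have "(\<Sum>i\<in>UNIV. row_sum A i) = (\<Sum>j\<in>UNIV. col_sum A j)"
    unfolding row_sum_def col_sum_def by (rule sum.swap)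
  also have "\<dots> = - (\<Sum>i\<in>UNIV. row_sum A i)"
    by (simp add: skew_symmetric_col_sum[OF assms] sum_negf)
  finally show ?thesis by simp
qed

lemma tdoa_matricesI: "(\<And>i j. M $ i $ j = \<tau> $ i - \<tau> $ j) \<Longrightarrow> M \<in> tdoa_matrices"
  unfolding tdoa_matrices_def by blast

lemma tdoa_matrices_diff:
  fixes A B :: "real^'n^'n"
  assumes "A \<in> tdoa_matrices" "B \<in> tdoa_matrices"
  shows "A - B \<in> tdoa_matrices"
proof -
  obtain \<alpha> \<beta> :: "real^'n" where "\<And>i j. A $ i $ j = \<alpha> $ i - \<alpha> $ j" "\<And>i j. B $ i $ j = \<beta> $ i - \<beta> $ j"
    using assms unfolding tdoa_matrices_def by blast
  then show ?thesis
    by (intro tdoa_matricesI[of _ "\<alpha> - \<beta>"]) simp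
qed

lemma mult_ones_mat_entry:
  fixes A :: "real^'n^'n"
  shows "(A ** ones_mat + ones_mat ** A) $ i $ j = row_sum A i + col_sum A j"
  by (simp add: matrix_matrix_mult_def ones_mat_def row_sum_def col_sum_def)

lemma frob_inner_tdoa_eq_zero:
  fixes E :: "real^'n^'n"
  assumes "\<And>i. row_sum E i = 0" "\<And>j. col_sum E j = 0"
    and "M \<in> tdoa_matrices"
  shows "(\<Sum>i\<in>UNIV. \<Sum>j\<in>UNIV. E $ i $ j * M $ i $ j) = 0"
proof -
  obtain \<tau> :: "real^'n" where \<tau>: "\<And>i j. M $ i $ j = \<tau> $ i - \<tau> $ j"
    using assms(3) unfolding tdoa_matrices_def by blast
  have "(\<Sum>i\<in>UNIV. \<Sum>j\<in>UNIV. E $ i $ j * M $ i $ j)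
      = (\<Sum>i\<in>UNIV. \<tau> $ i * row_sum E i) - (\<Sum>i\<in>UNIV. \<Sum>j\<in>UNIV. E $ i $ j * \<tau> $ j)"
    by (simp add: \<tau> row_sum_def algebra_simps sum_subtractf sum_distrib_left)
  also have "(\<Sum>i\<in>UNIV. \<Sum>j\<in>UNIV. E $ i $ j * \<tau> $ j) = (\<Sum>j\<in>UNIV. \<tau> $ j * col_sum E j)"
    by (subst sum.swap) (simp add: col_sum_def sum_distrib_left mult.commute)
  finally show ?thesis using assms(1,2) by simp
qed

lemma frob_norm_sq_le_add_tdoa:
  fixes E :: "real^'n^'n"
  assumes "\<And>i. row_sum E i = 0" "\<And>j. col_sum E j = 0"
    and "M \<in> tdoa_matrices"
  shows "(frob_norm E)\<^sup>2 \<le> (frob_norm (E + M))\<^sup>2"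
proof -
  have "(frob_norm (E + M))\<^sup>2
      = (frob_norm E)\<^sup>2 + 2 * (\<Sum>i\<in>UNIV. \<Sum>j\<in>UNIV. E $ i $ j * M $ i $ j) + (frob_norm M)\<^sup>2"
    unfolding frob_norm_sq
    by (simp add: power2_sum sum.distrib sum_distrib_left mult.assoc)
  then show ?thesis
    using frob_inner_tdoa_eq_zero[OF assms] by simp
qed

theorem theorem3:
  fixes Mt :: "real^'n^'n"
  assumes "skew_symmetric Mt"
  shows "(1 / real CARD('n)) *\<^sub>R (Mt ** ones_mat + ones_mat ** Mt) \<in> tdoa_matrices
       \<and> (\<forall>M \<in> tdoa_matrices.
            (frob_norm (Mt - (1 / real CARD('n)) *\<^sub>R (Mt ** ones_mat + ones_mat ** Mt)))^2
              \<le> (frob_norm (Mt - M))^2)"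
proof -
  define n where "n = real CARD('n)"
  define Ms where "Ms = (1 / n) *\<^sub>R (Mt ** ones_mat + ones_mat ** Mt)"
  have Ms_entry: "Ms $ i $ j = row_sum Mt i / n - row_sum Mt j / n" for i j
    using mult_ones_mat_entry[of Mt i j]
    unfolding Ms_def by (simp add: skew_symmetric_col_sum[OF assms] diff_divide_distrib)
  have Ms_tdoa: "Ms \<in> tdoa_matrices"
    using Ms_entry by (intro tdoa_matricesI[of _ "\<chi> i. row_sum Mt i / n"]) simp
  have sum_zero: "(\<Sum>k\<in>UNIV. row_sum Mt k) = 0" and "n > 0"
    using skew_symmetric_sum_row_sum[OF assms] by (simp_all add: n_def)
  have "row_sum (Mt - Ms) i = row_sum Mt i - n * (row_sum Mt i / n) + (\<Sum>k\<in>UNIV. row_sum Mt k) / n" for i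
    unfolding row_sum_def[of "Mt - Ms"] by (simp add: Ms_entry sum_subtractf sum_divide_distrib n_def row_sum_def)
  moreover have "col_sum (Mt - Ms) j = col_sum Mt j - (\<Sum>k\<in>UNIV. row_sum Mt k) / n + n * (row_sum Mt j / n)" for j
    unfolding col_sum_def[of "Mt - Ms"] by (simp add: Ms_entry sum_subtractf sum_divide_distrib n_def col_sum_def)
  ultimately have "row_sum (Mt - Ms) i = 0" "col_sum (Mt - Ms) j = 0" for i j
    using sum_zero \<open>n > 0\<close> by (simp_all add: skew_symmetric_col_sum[OF assms])
  then have "(frob_norm (Mt - Ms))\<^sup>2 \<le> (frob_norm (Mt - M))\<^sup>2" if "M \<in> tdoa_matrices" for M
    using frob_norm_sq_le_add_tdoa[of "Mt - Ms", OF _ _ tdoa_matrices_diff[OF Ms_tdoa that]] by simp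
  with Ms_tdoa show ?thesis
    unfolding Ms_def n_def by blast
qed

end
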